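(* Let $A$ be a synaptic algebra, $p,q\in P$, $r:=[p,q]:=(p\vee q)\wedge(p\vee q^{\perp})\wedge(p^{\perp}\vee q)\wedge(p^{\perp}\vee q^{\perp})$, $c:=(pqp+p^{\perp}q^{\perp}p^{\perp})^{1/2}$ and $s:=(pq^{\perp}p+p^{\perp}qp^{\perp})^{1/2}$. Then: (i) $c^{\circ}Cp$, $c^{\circ}Cq$, $c^{\circ}Cs$, $c^{\circ}Cr$, $s^{\circ}Cp$, $s^{\circ}Cq$, $s^{\circ}Cr$, $s^{\circ}Cc$, and $c^{\circ}Cs^{\circ}$; (ii) $c^{\circ}=(p\vee q^{\perp})\wedge(p^{\perp}\vee q)$ and $s^{\circ}=(p\vee q)\wedge(p^{\perp}\vee q^{\perp})$; (iii) $(cs)^{\circ}=c^{\circ}s^{\circ}=c^{\circ}\wedge s^{\circ}=(p\vee q)\wedge(p\vee q^{\perp})\wedge(p^{\perp}\vee q)\wedge(p^{\perp}\vee q^{\perp})=r=[p,q]$; (iv) $c^2(s^{\circ})^{\perp}=(s^{\circ})^{\perp}c^2=(s^{\circ})^{\perp}$, whence $(s^{\circ})^{\perp}\le c^2\le c$; (v) $s^2(c^{\circ})^{\perp}=(c^{\circ})^{\perp}s^2=(c^{\circ})^{\perp}$, whence $(c^{\circ})^{\perp}\le s^2\le s$.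
   Context: Synaptic algebra (Foulis): $R$ is a real linear associative algebra with unit $1$, and $A\subseteq R$ is a real linear subspace with $1\in A$. For $a,b\in A$ write $aCb$ iff $ab=ba$; $C(a):=\{b\in A: aCb\}$; $CC(a):=\{b\in A: bCd \text{ for all } d\in C(a)\}$. $A$ is a synaptic algebra with enveloping algebra $R$ iff: (SA1) $A$ is a partially ordered archimedean real linear space with positive cone $A^+$, $1$ is an order unit, $\|\cdot\|$ the order-unit norm; (SA2) $a\in A\Rightarrow a^2\in A^+$; (SA3) $a,b\in A^+\Rightarrow aba\in A^+$; (SA4) if $a\in A$, $b\in A^+$, $aba=0$ then $ab=ba=0$; (SA5) if $a\in A^+$ there is $b\in A^+\cap CC(a)$ with $b^2=a$; (SA6) for $a\in A$ there is $p=p^2\in A$ with $ab=0\Leftrightarrow pb=0$ for all $b\in A$; (SA7) if $1\le a$ there is $b\in A$ with $ab=ba=1$; (SA8) if $a,b\in A$, $a_1\le a_2\le\cdots$ are pairwise commuting elements of $C(b)$ with $\|a-a_n\|\to0$, then $a\in C(b)$. $A$ is nondegenerate. $P:=\{p\in A:p=p^2\}$ with the inherited order is an orthomodular lattice with $p^{\perp}:=1-p$, meet $\wedge$, join $\vee$. For $0\le a$, $a^{1/2}$ is its unique positive square root in $A$. The carrier $a^{\circ}$ of $a\in A$ is the unique projection such that for all $b\in A$, $ab=0\Leftrightarrow a^{\circ}b=0$. (Here $c$ and $s$ commute, so $cs\in A$.) *)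

theory Defs
  imports Complex_Main
begin

text \<open>The enveloping algebra R is the type 'r (a real linear associative algebra with unit);
  A :: 'r set is the synaptic algebra, Pos :: 'r set its positive cone A+.\<close>

definition sa_le :: "'r::real_algebra_1 set \<Rightarrow> 'r \<Rightarrow> 'r \<Rightarrow> bool" where
  "sa_le Pos a b \<longleftrightarrow> b - a \<in> Pos"

definition commutes :: "'r::real_algebra_1 \<Rightarrow> 'r \<Rightarrow> bool" where
  "commutes a b \<longleftrightarrow> a * b = b * a"

definition commutant :: "'r::real_algebra_1 set \<Rightarrow> 'r \<Rightarrow> 'r set" where
  "commutant A a = {b \<in> A. commutes a b}"

definition bicommutant :: "'r::real_algebra_1 set \<Rightarrow> 'r \<Rightarrow> 'r set" where
  "bicommutant A a = {b \<in> A. \<forall>d \<in> commutant A a. commutes b d}"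

definition ou_norm :: "'r::real_algebra_1 set \<Rightarrow> 'r \<Rightarrow> real" where
  "ou_norm Pos a = Inf {t. 0 < t \<and> sa_le Pos (- (t *\<^sub>R 1)) a \<and> sa_le Pos a (t *\<^sub>R 1)}"

definition synaptic_algebra :: "'r::real_algebra_1 set \<Rightarrow> 'r set \<Rightarrow> bool" where
  "synaptic_algebra A Pos \<longleftrightarrow>
     \<comment> \<open>A is a real linear subspace of R containing 1\<close>
     0 \<in> A \<and> 1 \<in> A \<and> (\<forall>a\<in>A. \<forall>b\<in>A. a + b \<in> A) \<and> (\<forall>t::real. \<forall>a\<in>A. t *\<^sub>R a \<in> A) \<and>
     \<comment> \<open>SA1: partially ordered (positive cone), archimedean, 1 is an order unit\<close>
     Pos \<subseteq> A \<and> (\<forall>a\<in>Pos. \<forall>b\<in>Pos. a + b \<in> Pos) \<and> (\<forall>t::real. \<forall>a\<in>Pos. 0 \<le> t \<longrightarrow> t *\<^sub>R a \<in> Pos) \<and>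
     (\<forall>a\<in>Pos. - a \<in> Pos \<longrightarrow> a = 0) \<and>
     (\<forall>a\<in>A. \<forall>b\<in>A. (\<forall>n::nat. sa_le Pos (real n *\<^sub>R a) b) \<longrightarrow> sa_le Pos a 0) \<and>
     (\<forall>a\<in>A. \<exists>n::nat. sa_le Pos a (real n *\<^sub>R 1)) \<and>
     \<comment> \<open>SA2\<close>
     (\<forall>a\<in>A. a * a \<in> Pos) \<and>
     \<comment> \<open>SA3\<close>
     (\<forall>a\<in>Pos. \<forall>b\<in>Pos. a * b * a \<in> Pos) \<and>
     \<comment> \<open>SA4\<close>
     (\<forall>a\<in>A. \<forall>b\<in>Pos. a * b * a = 0 \<longrightarrow> a * b = 0 \<and> b * a = 0) \<and>
     \<comment> \<open>SA5\<close>
     (\<forall>a\<in>Pos. \<exists>b\<in>Pos. b \<in> bicommutant A a \<and> b * b = a) \<and>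
     \<comment> \<open>SA6\<close>
     (\<forall>a\<in>A. \<exists>p\<in>A. p * p = p \<and> (\<forall>b\<in>A. a * b = 0 \<longleftrightarrow> p * b = 0)) \<and>
     \<comment> \<open>SA7\<close>
     (\<forall>a\<in>A. sa_le Pos 1 a \<longrightarrow> (\<exists>b\<in>A. a * b = 1 \<and> b * a = 1)) \<and>
     \<comment> \<open>SA8\<close>
     (\<forall>a\<in>A. \<forall>b\<in>A. \<forall>x::nat \<Rightarrow> 'r.
        (\<forall>n. x n \<in> commutant A b) \<and> (\<forall>n. sa_le Pos (x n) (x (Suc n))) \<and>
        (\<forall>m n. commutes (x m) (x n)) \<and> (\<lambda>n. ou_norm Pos (a - x n)) \<longlonglongrightarrow> 0
        \<longrightarrow> a \<in> commutant A b)"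

definition proj :: "'r::real_algebra_1 set \<Rightarrow> 'r set" where
  "proj A = {p \<in> A. p * p = p}"

definition perp :: "'r::real_algebra_1 \<Rightarrow> 'r" where
  "perp p = 1 - p"

definition pmeet :: "'r::real_algebra_1 set \<Rightarrow> 'r set \<Rightarrow> 'r \<Rightarrow> 'r \<Rightarrow> 'r" where
  "pmeet A Pos p q = (THE r. r \<in> proj A \<and> sa_le Pos r p \<and> sa_le Pos r q \<and>
      (\<forall>t\<in>proj A. sa_le Pos t p \<and> sa_le Pos t q \<longrightarrow> sa_le Pos t r))"

definition pjoin :: "'r::real_algebra_1 set \<Rightarrow> 'r set \<Rightarrow> 'r \<Rightarrow> 'r \<Rightarrow> 'r" where
  "pjoin A Pos p q = (THE r. r \<in> proj A \<and> sa_le Pos p r \<and> sa_le Pos q r \<and>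
      (\<forall>t\<in>proj A. sa_le Pos p t \<and> sa_le Pos q t \<longrightarrow> sa_le Pos r t))"

definition sa_sqrt :: "'r::real_algebra_1 set \<Rightarrow> 'r \<Rightarrow> 'r" where
  "sa_sqrt Pos a = (THE b. b \<in> Pos \<and> b * b = a)"

definition carrier :: "'r::real_algebra_1 set \<Rightarrow> 'r \<Rightarrow> 'r" where
  "carrier A a = (THE p. p \<in> proj A \<and> (\<forall>b\<in>A. a * b = 0 \<longleftrightarrow> p * b = 0))"

end

theory Submission
  imports Defs
begin

text \<open>
  Put \<open>d = p - q\<close>. Then \<open>s\<^sup>2 = d\<^sup>2\<close> and \<open>c\<^sup>2 = (p - q\<^sup>\<perp>)\<^sup>2 = 1 - d\<^sup>2\<close> commute with
  \<open>p\<close> and \<open>q\<close>, so \<open>s\<degree> = (d\<^sup>2)\<degree>\<close> and \<open>c\<degree>\<close> are projections commuting with \<open>p\<close>, \<open>q\<close>, \<open>c\<close>,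
  \<open>s\<close> and each other. For any two projections, \<open>p \<and> q = p (1 - ((p - q)\<^sup>2)\<degree>)\<close>: \<open>p\<close> and \<open>q\<close>
  agree off that carrier, and every common subprojection is annihilated by \<open>(p - q)\<^sup>2\<close>.
  Passing to complements, each of the four joins in \<open>[p, q]\<close> becomes a polynomial in the
  commuting projections \<open>p\<close>, \<open>c\<degree>\<close>, \<open>s\<degree>\<close>, and (ii) and (iii) are computations in
  this commutative algebra. Finally (iv) and (v) follow from \<open>c\<^sup>2 + s\<^sup>2 = 1\<close>, because
  \<open>s\<^sup>2\<close> vanishes on \<open>(s\<degree>)\<^sup>\<perp>\<close> and \<open>x\<^sup>2 \<le> 1\<close> forces \<open>x\<^sup>2 \<le> x\<close> for positive \<open>x\<close>.
\<close>

lemma mult_one_minus_eq_zero_iff: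
  fixes x y :: "'a::ring_1"
  shows "x * (1 - y) = 0 \<longleftrightarrow> x * y = x"
  by (metis eq_iff_diff_eq_0 mult.right_neutral right_diff_distrib)

lemma one_minus_mult_eq_zero_iff:
  fixes x y :: "'a::ring_1"
  shows "(1 - y) * x = 0 \<longleftrightarrow> y * x = x"
  by (metis eq_iff_diff_eq_0 mult_1 left_diff_distrib)

text \<open>The axioms of a synaptic algebra that the argument uses.\<close>

locale synaptic =
  fixes A Pos :: "'r::real_algebra_1 set"
  assumes one_mem: "1 \<in> A"
    and add_mem: "a \<in> A \<Longrightarrow> b \<in> A \<Longrightarrow> a + b \<in> A"
    and scaleR_mem: "a \<in> A \<Longrightarrow> t *\<^sub>R a \<in> A"
    and Pos_subset: "Pos \<subseteq> A"
    and Pos_add: "a \<in> Pos \<Longrightarrow> b \<in> Pos \<Longrightarrow> a + b \<in> Pos"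
    and Pos_antisym: "a \<in> Pos \<Longrightarrow> - a \<in> Pos \<Longrightarrow> a = 0"
    and square_Pos: "a \<in> A \<Longrightarrow> a * a \<in> Pos"
    and sandwich_Pos: "a \<in> Pos \<Longrightarrow> b \<in> Pos \<Longrightarrow> a * b * a \<in> Pos"
    and sandwich_eq_zero: "a \<in> A \<Longrightarrow> b \<in> Pos \<Longrightarrow> a * b * a = 0 \<Longrightarrow> a * b = 0 \<and> b * a = 0"
    and sqrt_exists: "a \<in> Pos \<Longrightarrow> \<exists>b\<in>Pos. b \<in> bicommutant A a \<and> b * b = a"
    and carrier_exists: "a \<in> A \<Longrightarrow> \<exists>e\<in>A. e * e = e \<and> (\<forall>b\<in>A. a * b = 0 \<longleftrightarrow> e * b = 0)"
    and inverse_exists: "a \<in> A \<Longrightarrow> sa_le Pos 1 a \<Longrightarrow> \<exists>b\<in>A. a * b = 1 \<and> b * a = 1"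

lemma synaptic_algebra_imp_synaptic: "synaptic_algebra A Pos \<Longrightarrow> synaptic A Pos"
  unfolding synaptic_algebra_def by unfold_locales (elim conjE; simp)+

context synaptic
begin

lemma Pos_mem: "a \<in> Pos \<Longrightarrow> a \<in> A"
  using Pos_subset by blast

lemma diff_mem: "a \<in> A \<Longrightarrow> b \<in> A \<Longrightarrow> a - b \<in> A"
  using add_mem[of a "(-1) *\<^sub>R b"] scaleR_mem[of b "-1"] by simp

lemma square_mem: "a \<in> A \<Longrightarrow> a * a \<in> A"
  using square_Pos Pos_mem by blast

lemma jordan_product_mem: "a \<in> A \<Longrightarrow> b \<in> A \<Longrightarrow> a * b + b * a \<in> A"
proof -
  assume "a \<in> A" "b \<in> A"
  moreover have "a * b + b * a = (a + b) * (a + b) - a * a - b * b"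
    by (simp add: algebra_simps)
  ultimately show ?thesis
    by (simp add: diff_mem square_mem add_mem)
qed

lemma commuting_mult_mem:
  assumes "a \<in> A" "b \<in> A" "a * b = b * a"
  shows "a * b \<in> A"
proof -
  have "a * b = (1/2::real) *\<^sub>R (a * b + b * a)"
    using assms(3) by (simp add: scaleR_2[symmetric])
  then show ?thesis
    using jordan_product_mem[OF assms(1,2)] scaleR_mem by metis
qed

lemma sandwich_mem:
  assumes a: "a \<in> A" and b: "b \<in> A"
  shows "a * b * a \<in> A"
proof -
  have "a * b * a = (1/2::real) *\<^sub>R
      (a * (a * b + b * a) + (a * b + b * a) * a - ((a * a) * b + b * (a * a)))"
    by (simp add: algebra_simps scaleR_2[symmetric])
  moreover have "a * (a * b + b * a) + (a * b + b * a) * a - ((a * a) * b + b * (a * a)) \<in> A"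
    using a b by (intro diff_mem jordan_product_mem square_mem)
  ultimately show ?thesis
    using scaleR_mem by metis
qed

lemma one_Pos: "1 \<in> Pos"
  using square_Pos[OF one_mem] by simp

lemma Pos_add_eq_zero: "a \<in> Pos \<Longrightarrow> b \<in> Pos \<Longrightarrow> a + b = 0 \<Longrightarrow> a = 0"
  by (metis Pos_antisym add_eq_0_iff)

lemma square_eq_zero: "a \<in> A \<Longrightarrow> a * a = 0 \<Longrightarrow> a = 0"
  using sandwich_eq_zero[OF _ one_Pos, of a] by simp

lemma mult_eq_zero_commute:
  assumes a: "a \<in> A" and b: "b \<in> A" and ab: "a * b = 0"
  shows "b * a = 0"
proof -
  have "b * a \<in> A"
    using jordan_product_mem[OF a b] ab by simp
  moreover have "(b * a) * (b * a) = b * (a * b) * a"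
    by (simp add: mult.assoc)
  ultimately show ?thesis
    using square_eq_zero[of "b * a"] ab by simp
qed

lemma commuting_mult_Pos:
  assumes a: "a \<in> Pos" and b: "b \<in> Pos" and ab: "a * b = b * a"
  shows "a * b \<in> Pos"
proof -
  obtain r where r: "r \<in> Pos" "r \<in> bicommutant A a" "r * r = a"
    using sqrt_exists[OF a] by blast
  have "b \<in> commutant A a"
    using ab Pos_mem[OF b] unfolding commutant_def commutes_def by simp
  then have "r * b = b * r"
    using r(2) unfolding bicommutant_def commutes_def by blast
  then have "a * b = r * b * r"
    using r(3) by (metis mult.assoc)
  then show ?thesis
    using sandwich_Pos[OF r(1) b] by simp
qed

section \<open>Square roots\<close>

lemma sqrt_unique:
  assumes a: "a \<in> Pos" and b: "b \<in> Pos" "b * b = a"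
    and r: "r \<in> Pos" "r \<in> bicommutant A a" "r * r = a"
  shows "b = r"
proof -
  have bA: "b \<in> A" and rA: "r \<in> A"
    using b r Pos_mem by auto
  have "b \<in> commutant A a"
    using bA b(2) unfolding commutant_def commutes_def by (auto simp: mult.assoc)
  then have br: "r * b = b * r"
    using r(2) unfolding bicommutant_def commutes_def by blast
  define d where "d = b - r"
  have dA: "d \<in> A"
    using bA rA diff_mem d_def by simp
  have "d * b = b * d" and "d * r = r * d"
    using br by (simp_all add: d_def algebra_simps)
  then have "d * b * d = b * (d * d)" and "b * (d * d) = (d * d) * b"
    and "d * r * d = r * (d * d)" and "r * (d * d) = (d * d) * r"
    by (metis mult.assoc)+
  then have db: "d * b * d \<in> Pos" and dr: "d * r * d \<in> Pos"
    using commuting_mult_Pos square_Pos[OF dA] b(1) r(1) by metis+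
  \<comment> \<open>\<open>d b d + d r d = (b\<^sup>2 - r\<^sup>2) d = 0\<close>, and both summands are positive\<close>
  have "d * b * d + d * r * d = (b * b - r * r + (b * r - r * b)) * d"
    unfolding d_def by (simp add: algebra_simps)
  then have "d * b * d + d * r * d = 0"
    using b(2) r(3) br by simp
  then have "d * b * d = 0" and "d * r * d = 0"
    using Pos_add_eq_zero db dr by (auto simp: add.commute)
  then have "d * b = 0" and "d * r = 0"
    using sandwich_eq_zero dA b(1) r(1) by blast+
  then have "d * d = 0"
    unfolding d_def by (simp add: algebra_simps)
  then have "d = 0"
    using square_eq_zero dA by blast
  then show ?thesis
    by (simp add: d_def)
qed

lemma sa_sqrt_spec:
  assumes a: "a \<in> Pos"
  shows "sa_sqrt Pos a \<in> Pos" and "sa_sqrt Pos a \<in> bicommutant A a"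
    and "sa_sqrt Pos a * sa_sqrt Pos a = a"
proof -
  obtain r where r: "r \<in> Pos" "r \<in> bicommutant A a" "r * r = a"
    using sqrt_exists[OF a] by blast
  have "sa_sqrt Pos a = r"
    unfolding sa_sqrt_def
  proof (rule the_equality)
    show "r \<in> Pos \<and> r * r = a"
      using r by blast
    show "b \<in> Pos \<and> b * b = a \<Longrightarrow> b = r" for b
      using sqrt_unique[OF a _ _ r] by blast
  qed
  then show "sa_sqrt Pos a \<in> Pos" "sa_sqrt Pos a \<in> bicommutant A a"
    "sa_sqrt Pos a * sa_sqrt Pos a = a"
    using r by simp_all
qed

lemma sa_sqrt_commute:
  assumes a: "a \<in> Pos" and b: "b \<in> A" and ab: "a * b = b * a"
  shows "sa_sqrt Pos a * b = b * sa_sqrt Pos a"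
proof -
  have "b \<in> commutant A a"
    using b ab unfolding commutant_def commutes_def by simp
  then show ?thesis
    using sa_sqrt_spec(2)[OF a] unfolding bicommutant_def commutes_def by auto
qed

lemma square_le_self:
  assumes a: "a \<in> Pos" and le: "sa_le Pos (a * a) 1"
  shows "sa_le Pos (a * a) a"
proof -
  have aA: "a \<in> A"
    using Pos_mem[OF a] .
  have "1 + a \<in> A" and uP: "1 + a \<in> Pos"
    using add_mem[OF one_mem aA] Pos_add[OF one_Pos a] .
  moreover have "sa_le Pos 1 (1 + a)"
    unfolding sa_le_def using a by simp
  ultimately obtain w where w: "w \<in> A" "(1 + a) * w = 1" "w * (1 + a) = 1"
    using inverse_exists by blast
  have "w * (1 + a) = (1 + a) * w"
    using w by simp
  then have wa: "w * a = a * w"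
    by (simp add: algebra_simps)
  have "w * w * (1 + a) = w"
    using w by (simp add: mult.assoc)
  moreover have "(w * w) * (1 + a) \<in> Pos"
    using commuting_mult_Pos[OF square_Pos[OF w(1)] uP] w by (metis mult.assoc)
  ultimately have wP: "w \<in> Pos"
    by simp
  \<comment> \<open>\<open>1 - a = (1 + a)\<^sup>-\<^sup>1 (1 - a\<^sup>2)\<close> is a product of commuting positive elements\<close>
  have "w * (1 - a * a) = (w * (1 + a)) * (1 - a)"
    by (simp add: algebra_simps)
  then have "w * (1 - a * a) = 1 - a"
    using w by simp
  moreover have "w * (1 - a * a) = (1 - a * a) * w"
    using wa by (simp add: algebra_simps) (metis mult.assoc)
  ultimately have "1 - a \<in> Pos"
    using commuting_mult_Pos[OF wP] le unfolding sa_le_def by metis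
  moreover have "a * (1 - a) = (1 - a) * a"
    by (simp add: algebra_simps)
  ultimately have "a * (1 - a) \<in> Pos"
    using commuting_mult_Pos[OF a] by simp
  then show ?thesis
    unfolding sa_le_def by (simp add: algebra_simps)
qed

section \<open>Projections\<close>

lemma proj_mem: "p \<in> proj A \<Longrightarrow> p \<in> A"
  and proj_idem: "p \<in> proj A \<Longrightarrow> p * p = p"
  unfolding proj_def by auto

lemma proj_Pos: "p \<in> proj A \<Longrightarrow> p \<in> Pos"
  using square_Pos proj_mem proj_idem by metis

lemma one_minus_proj: "p \<in> proj A \<Longrightarrow> 1 - p \<in> proj A"
  unfolding proj_def using diff_mem one_mem by (auto simp: algebra_simps)

lemma commuting_mult_proj:
  assumes p: "p \<in> proj A" and q: "q \<in> proj A" and pq: "p * q = q * p"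
  shows "p * q \<in> proj A"
proof -
  have "p * q \<in> A"
    using commuting_mult_mem proj_mem p q pq by blast
  moreover have "(p * q) * (p * q) = p * q"
    using pq proj_idem[OF p] proj_idem[OF q] by (metis mult.assoc)
  ultimately show ?thesis
    unfolding proj_def by simp
qed

lemma sa_le_antisym: "sa_le Pos a b \<Longrightarrow> sa_le Pos b a \<Longrightarrow> a = b"
  unfolding sa_le_def using Pos_antisym[of "b - a"] by simp

lemma sa_le_one_minus_iff: "sa_le Pos (1 - a) (1 - b) \<longleftrightarrow> sa_le Pos b a"
  and sa_le_one_minus_swap: "sa_le Pos a (1 - b) \<longleftrightarrow> sa_le Pos b (1 - a)"
  unfolding sa_le_def by (simp_all add: algebra_simps)

lemma proj_le_iff:
  assumes t: "t \<in> proj A" and p: "p \<in> proj A"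
  shows "sa_le Pos t p \<longleftrightarrow> p * t = t"
proof
  let ?q = "1 - p"
  have q: "?q \<in> proj A"
    using one_minus_proj[OF p] .
  assume "sa_le Pos t p"
  \<comment> \<open>\<open>(1 - p) t (1 - p)\<close> is positive, and so is its negative \<open>(1 - p) (p - t) (1 - p)\<close>\<close>
  then have "?q * (p - t) * ?q \<in> Pos"
    using sandwich_Pos[OF proj_Pos[OF q]] unfolding sa_le_def by simp
  moreover have "?q * (p - t) * ?q = - (?q * t * ?q)"
    using proj_idem[OF p] by (simp add: algebra_simps)
  ultimately have "?q * t * ?q = 0"
    using Pos_antisym sandwich_Pos[OF proj_Pos[OF q] proj_Pos[OF t]] by metis
  then have "?q * t = 0"
    using sandwich_eq_zero proj_mem[OF q] proj_Pos[OF t] by blast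
  then show "p * t = t"
    by (simp add: algebra_simps)
next
  assume pt: "p * t = t"
  then have "(1 - p) * t = 0"
    by (simp add: algebra_simps)
  then have "t * (1 - p) = 0"
    using mult_eq_zero_commute proj_mem one_minus_proj p t by blast
  then have tp: "t * p = t"
    by (simp add: algebra_simps)
  have "(p - t) * (p - t) = p - t"
    using pt tp proj_idem[OF p] proj_idem[OF t] by (simp add: algebra_simps)
  then show "sa_le Pos t p"
    unfolding sa_le_def using square_Pos diff_mem proj_mem p t by metis
qed

section \<open>Carriers\<close>

lemma proj_eqI:
  assumes e1: "e1 \<in> proj A" and e2: "e2 \<in> proj A"
    and "e2 * e1 = e2" and "e1 * e2 = e1"
  shows "e1 = e2"
proof -
  have "(e1 - e2) * (e1 - e2) = 0"
    using assms proj_idem[OF e1] proj_idem[OF e2] by (simp add: algebra_simps)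
  then have "e1 - e2 = 0"
    using square_eq_zero diff_mem proj_mem e1 e2 by blast
  then show ?thesis
    by simp
qed

lemma carrier_unique:
  assumes e1: "e1 \<in> proj A" and e2: "e2 \<in> proj A"
    and ann: "\<forall>b\<in>A. e1 * b = 0 \<longleftrightarrow> e2 * b = 0"
  shows "e1 = e2"
proof -
  have "e1 * (1 - e1) = 0" and "e2 * (1 - e2) = 0"
    using proj_idem[OF e1] proj_idem[OF e2] mult_one_minus_eq_zero_iff by auto
  then have "e2 * (1 - e1) = 0" and "e1 * (1 - e2) = 0"
    using ann proj_mem one_minus_proj e1 e2 by blast+
  then show ?thesis
    using proj_eqI[OF e1 e2] mult_one_minus_eq_zero_iff by auto
qed

lemma carrier_spec:
  assumes a: "a \<in> A"
  shows carrier_proj: "carrier A a \<in> proj A"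
    and carrier_mult_eq_zero_iff: "\<And>b. b \<in> A \<Longrightarrow> carrier A a * b = 0 \<longleftrightarrow> a * b = 0"
proof -
  obtain e where e: "e \<in> A" "e * e = e" "\<forall>b\<in>A. a * b = 0 \<longleftrightarrow> e * b = 0"
    using carrier_exists[OF a] by blast
  then have ep: "e \<in> proj A"
    unfolding proj_def by simp
  have "carrier A a = e"
    unfolding carrier_def
  proof (rule the_equality)
    show "e \<in> proj A \<and> (\<forall>b\<in>A. a * b = 0 \<longleftrightarrow> e * b = 0)"
      using ep e by blast
    show "f \<in> proj A \<and> (\<forall>b\<in>A. a * b = 0 \<longleftrightarrow> f * b = 0) \<Longrightarrow> f = e" for f
      using carrier_unique[of f e] ep e(3) by blast
  qed
  then show "carrier A a \<in> proj A" "\<And>b. b \<in> A \<Longrightarrow> carrier A a * b = 0 \<longleftrightarrow> a * b = 0"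
    using ep e by simp_all
qed

lemma carrier_eqI:
  assumes a: "a \<in> A" and e: "e \<in> proj A" and ann: "\<And>b. b \<in> A \<Longrightarrow> e * b = 0 \<longleftrightarrow> a * b = 0"
  shows "carrier A a = e"
  using carrier_unique[OF carrier_proj[OF a] e] carrier_mult_eq_zero_iff[OF a] ann by blast

lemma mult_carrier:
  assumes a: "a \<in> A"
  shows "a * carrier A a = a" and "carrier A a * a = a"
proof -
  let ?e = "carrier A a"
  have e': "1 - ?e \<in> A"
    using proj_mem one_minus_proj carrier_proj[OF a] by blast
  have "?e * (1 - ?e) = 0"
    using proj_idem[OF carrier_proj[OF a]] mult_one_minus_eq_zero_iff by auto
  then have "a * (1 - ?e) = 0"
    using carrier_mult_eq_zero_iff[OF a e'] by simp
  moreover from this have "(1 - ?e) * a = 0"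
    using mult_eq_zero_commute[OF a e'] by simp
  ultimately show "a * ?e = a" and "?e * a = a"
    using mult_one_minus_eq_zero_iff one_minus_mult_eq_zero_iff by auto
qed

lemma one_minus_carrier:
  assumes a: "a \<in> A"
  shows "(1 - a) * (1 - carrier A a) = 1 - carrier A a"
    and "(1 - carrier A a) * (1 - a) = 1 - carrier A a"
  using mult_carrier[OF a] by (simp_all add: algebra_simps)

lemma one_minus_carrier_le:
  assumes a: "a \<in> A" and a': "1 - a \<in> Pos"
  shows "sa_le Pos (1 - carrier A a) (1 - a)"
proof -
  let ?e = "carrier A a"
  have "(1 - a) * ?e = (1 - a) - (1 - ?e)" and "?e * (1 - a) = (1 - a) - (1 - ?e)"
    using one_minus_carrier[OF a] by (simp_all add: algebra_simps)
  then have "(1 - a) - (1 - ?e) \<in> Pos"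
    using commuting_mult_Pos[OF a' proj_Pos[OF carrier_proj[OF a]]] by simp
  then show ?thesis
    unfolding sa_le_def .
qed

lemma carrier_commute:
  assumes a: "a \<in> A" and b: "b \<in> A" and ab: "a * b = b * a"
  shows "carrier A a * b = b * carrier A a"
proof -
  let ?e = "carrier A a"
  have e: "?e \<in> proj A"
    using carrier_proj[OF a] .
  have eA: "?e \<in> A" and ee: "?e * ?e = ?e" and eeL: "\<And>x. ?e * (?e * x) = ?e * x"
    using proj_mem[OF e] proj_idem[OF e] by (simp_all add: mult.assoc[symmetric])
  have ae: "a * ?e = a"
    using mult_carrier[OF a] by simp
  \<comment> \<open>the off-diagonal part \<open>y\<close> of \<open>b\<close> with respect to \<open>e\<close> is annihilated by \<open>a\<close>, hence by \<open>e\<close>\<close>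
  define y where "y = ?e * b * (1 - ?e) + (1 - ?e) * b * ?e"
  have "y = (?e * b + b * ?e) - 2 *\<^sub>R (?e * b * ?e)"
    unfolding y_def using ee eeL by (simp add: algebra_simps scaleR_2)
  then have yA: "y \<in> A"
    using jordan_product_mem[OF eA b] sandwich_mem[OF eA b] scaleR_mem diff_mem by metis
  have "a * y = a * ?e * b * (1 - ?e) + a * (1 - ?e) * b * ?e"
    unfolding y_def by (simp add: algebra_simps)
  also have "\<dots> = a * b * (1 - ?e)"
    using ae by (simp add: algebra_simps)
  also have "\<dots> = b * (a * (1 - ?e))"
    using ab by (simp add: mult.assoc)
  also have "\<dots> = 0"
    using ae by (simp add: algebra_simps)
  finally have "?e * y = 0"
    using carrier_mult_eq_zero_iff[OF a yA] by simp
  moreover from this have "y * ?e = 0"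
    using mult_eq_zero_commute[OF eA yA] by simp
  moreover have "?e * y = ?e * b * (1 - ?e)" and "y * ?e = (1 - ?e) * b * ?e"
    unfolding y_def using ee eeL by (simp_all add: algebra_simps)
  ultimately show ?thesis
    using ee eeL by (simp add: algebra_simps)
qed

lemma carrier_sa_sqrt:
  assumes a: "a \<in> Pos"
  shows "carrier A (sa_sqrt Pos a) = carrier A a"
proof -
  let ?r = "sa_sqrt Pos a"
  have rA: "?r \<in> A" and aA: "a \<in> A" and rr: "?r * ?r = a"
    using sa_sqrt_spec[OF a] a Pos_mem by auto
  have "?r * b = 0 \<longleftrightarrow> a * b = 0" if bA: "b \<in> A" for b
  proof
    assume "?r * b = 0"
    then show "a * b = 0"
      using rr by (metis mult.assoc mult_zero_right)
  next
    assume ab: "a * b = 0"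
    then have "b * a = 0"
      using mult_eq_zero_commute[OF aA bA] by simp
    then have rb: "?r * b = b * ?r"
      using sa_sqrt_commute[OF a bA] ab by simp
    then have "(?r * b) * (?r * b) = a * b * b"
      using rr by (metis mult.assoc)
    then show "?r * b = 0"
      using square_eq_zero[OF commuting_mult_mem[OF rA bA rb]] ab by simp
  qed
  then show ?thesis
    using carrier_eqI[OF rA carrier_proj[OF aA]] carrier_mult_eq_zero_iff[OF aA] by simp
qed

lemma carrier_commute_carrier:
  assumes a: "a \<in> A" and b: "b \<in> A" and ab: "a * b = b * a"
  shows "carrier A a * carrier A b = carrier A b * carrier A a"
  using carrier_commute[OF b proj_mem[OF carrier_proj[OF a]]] carrier_commute[OF a b ab]
  by simp

lemma carrier_mult_le_carriers:
  assumes a: "a \<in> A" and b: "b \<in> A" and ab: "a * b = b * a"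
  shows "carrier A (a * b) * (carrier A a * carrier A b) = carrier A (a * b)"
proof -
  let ?g = "carrier A a * carrier A b"
  have abA: "a * b \<in> A"
    using commuting_mult_mem[OF a b ab] .
  have g'A: "1 - ?g \<in> A"
    using commuting_mult_proj carrier_proj carrier_commute_carrier a b ab one_minus_proj proj_mem
    by metis
  have "a * b * ?g = a * (carrier A a * b) * carrier A b"
    using carrier_commute[OF a b ab] by (simp add: mult.assoc)
  then have "a * b * ?g = a * b"
    using mult_carrier a b by (metis mult.assoc)
  then have "carrier A (a * b) * (1 - ?g) = 0"
    using carrier_mult_eq_zero_iff[OF abA g'A] mult_one_minus_eq_zero_iff by blast
  then show ?thesis
    using mult_one_minus_eq_zero_iff by blast
qed

lemma carriers_le_carrier_mult:
  assumes a: "a \<in> A" and b: "b \<in> A" and ab: "a * b = b * a"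
  shows "carrier A a * carrier A b * carrier A (a * b) = carrier A a * carrier A b"
proof -
  let ?ea = "carrier A a" and ?h = "carrier A (a * b)"
  have abA: "a * b \<in> A"
    using commuting_mult_mem[OF a b ab] .
  have eaA: "?ea \<in> A" and h'A: "1 - ?h \<in> A"
    using carrier_proj a abA proj_mem one_minus_proj by blast+
  have eab: "?ea * b = b * ?ea"
    using carrier_commute[OF a b ab] .
  have "a * b * b = b * (a * b)"
    using ab by (simp add: mult.assoc)
  then have hb: "?h * b = b * ?h"
    using carrier_commute[OF abA b] by simp
  have "a * b * ?ea = a * (?ea * b)"
    using eab by (simp add: mult.assoc)
  also have "\<dots> = ?ea * (a * b)"
    using mult_carrier[OF a] by (metis mult.assoc)
  finally have hea: "?h * ?ea = ?ea * ?h"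
    using carrier_commute[OF abA eaA] by simp
  \<comment> \<open>peel \<open>a\<close> and then \<open>b\<close> off \<open>a b (1 - (ab)\<degree>) = 0\<close>, each time passing to the carrier\<close>
  have "a * (b * (1 - ?h)) = 0"
    using mult_carrier(1)[OF abA] mult_one_minus_eq_zero_iff by (metis mult.assoc)
  moreover have "b * (1 - ?h) \<in> A"
    using commuting_mult_mem[OF b h'A] hb by (simp add: algebra_simps)
  ultimately have "b * (?ea * (1 - ?h)) = 0"
    using carrier_mult_eq_zero_iff[OF a] eab by (metis mult.assoc)
  moreover have "?ea * (1 - ?h) \<in> A"
    using commuting_mult_mem[OF eaA h'A] hea by (simp add: algebra_simps)
  ultimately have "?ea * carrier A b * (1 - ?h) = 0"
    using carrier_mult_eq_zero_iff[OF b] carrier_commute_carrier[OF a b ab] by (metis mult.assoc)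
  then show ?thesis
    using mult_one_minus_eq_zero_iff by blast
qed

lemma carrier_mult:
  assumes "a \<in> A" and "b \<in> A" and "a * b = b * a"
  shows "carrier A (a * b) = carrier A a * carrier A b"
  using proj_eqI carrier_proj commuting_mult_mem commuting_mult_proj carrier_commute_carrier
    carrier_mult_le_carriers carriers_le_carrier_mult assms
  by metis

lemma carrier_self_mult: "a \<in> A \<Longrightarrow> carrier A (a * a) = carrier A a"
  using carrier_mult proj_idem carrier_proj by simp

lemma sum_squares_eq_one_carrier:
  assumes a: "a \<in> Pos" and b: "b \<in> Pos" and ab: "a * a + b * b = 1"
  shows "a * a * (1 - carrier A b) = 1 - carrier A b"
    and "(1 - carrier A b) * (a * a) = 1 - carrier A b"
    and "sa_le Pos (1 - carrier A b) (a * a)"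
    and "sa_le Pos (a * a) a"
proof -
  have aa: "a * a = 1 - b * b" and bA: "b * b \<in> A"
    using ab square_mem Pos_mem b by (auto simp: algebra_simps)
  show "a * a * (1 - carrier A b) = 1 - carrier A b"
    and "(1 - carrier A b) * (a * a) = 1 - carrier A b"
    using one_minus_carrier[OF bA] carrier_self_mult Pos_mem b unfolding aa by simp_all
  have "1 - b * b \<in> Pos"
    using aa square_Pos Pos_mem a by metis
  then show "sa_le Pos (1 - carrier A b) (a * a)"
    using one_minus_carrier_le[OF bA] carrier_self_mult Pos_mem b unfolding aa by simp
  show "sa_le Pos (a * a) a"
    using square_le_self[OF a] square_Pos Pos_mem b unfolding sa_le_def aa by simp
qed

section \<open>Meets and joins of projections\<close>

definition is_meet :: "'r \<Rightarrow> 'r \<Rightarrow> 'r \<Rightarrow> bool" where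
  "is_meet x y m \<longleftrightarrow> m \<in> proj A \<and> sa_le Pos m x \<and> sa_le Pos m y \<and>
      (\<forall>t\<in>proj A. sa_le Pos t x \<and> sa_le Pos t y \<longrightarrow> sa_le Pos t m)"

lemma pmeet_eqI:
  assumes "is_meet x y m"
  shows "pmeet A Pos x y = m"
  unfolding pmeet_def
proof (rule the_equality)
  show "m \<in> proj A \<and> sa_le Pos m x \<and> sa_le Pos m y \<and>
      (\<forall>t\<in>proj A. sa_le Pos t x \<and> sa_le Pos t y \<longrightarrow> sa_le Pos t m)"
    using assms unfolding is_meet_def .
  show "m' = m" if "m' \<in> proj A \<and> sa_le Pos m' x \<and> sa_le Pos m' y \<and>
      (\<forall>t\<in>proj A. sa_le Pos t x \<and> sa_le Pos t y \<longrightarrow> sa_le Pos t m')" for m'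
    using that assms sa_le_antisym unfolding is_meet_def by blast
qed

lemma pjoin_eqI:
  assumes m: "is_meet (1 - x) (1 - y) m"
  shows "pjoin A Pos x y = 1 - m"
  unfolding pjoin_def
proof (rule the_equality)
  have m': "1 - m \<in> proj A"
    using m one_minus_proj unfolding is_meet_def by blast
  have ub: "sa_le Pos x (1 - m)" "sa_le Pos y (1 - m)"
    using m sa_le_one_minus_swap unfolding is_meet_def by auto
  have least: "sa_le Pos (1 - m) t" if "t \<in> proj A" "sa_le Pos x t" "sa_le Pos y t" for t
  proof -
    have "sa_le Pos (1 - t) (1 - x)" "sa_le Pos (1 - t) (1 - y)"
      using that sa_le_one_minus_iff by auto
    then have "sa_le Pos (1 - t) m"
      using m one_minus_proj[OF that(1)] unfolding is_meet_def by blast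
    then show ?thesis
      using sa_le_one_minus_iff[of m "1 - t"] by simp
  qed
  show "1 - m \<in> proj A \<and> sa_le Pos x (1 - m) \<and> sa_le Pos y (1 - m) \<and>
      (\<forall>t\<in>proj A. sa_le Pos x t \<and> sa_le Pos y t \<longrightarrow> sa_le Pos (1 - m) t)"
    using m' ub least by blast
  show "j = 1 - m" if "j \<in> proj A \<and> sa_le Pos x j \<and> sa_le Pos y j \<and>
      (\<forall>t\<in>proj A. sa_le Pos x t \<and> sa_le Pos y t \<longrightarrow> sa_le Pos j t)" for j
    using that m' ub least sa_le_antisym by blast
qed

lemma is_meet_commuting:
  assumes x: "x \<in> proj A" and y: "y \<in> proj A" and xy: "x * y = y * x"
  shows "is_meet x y (x * y)"
  unfolding is_meet_def
proof (intro conjI ballI impI)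
  show m: "x * y \<in> proj A"
    using commuting_mult_proj[OF x y xy] .
  show "sa_le Pos (x * y) x"
    using proj_le_iff[OF m x] proj_idem[OF x] by (metis mult.assoc)
  show "sa_le Pos (x * y) y"
    using proj_le_iff[OF m y] proj_idem[OF y] xy by (metis mult.assoc)
  fix t assume t: "t \<in> proj A" and "sa_le Pos t x \<and> sa_le Pos t y"
  then have "x * t = t" "y * t = t"
    using proj_le_iff[OF t x] proj_le_iff[OF t y] by auto
  then show "sa_le Pos t (x * y)"
    using proj_le_iff[OF t m] by (simp add: mult.assoc)
qed

lemma pmeet_commuting:
  "x \<in> proj A \<Longrightarrow> y \<in> proj A \<Longrightarrow> x * y = y * x \<Longrightarrow> pmeet A Pos x y = x * y"
  using pmeet_eqI is_meet_commuting by blast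

lemma carrier_square_diff_commute:
  assumes p: "p \<in> proj A" and q: "q \<in> proj A"
  shows "carrier A ((p - q) * (p - q)) * p = p * carrier A ((p - q) * (p - q))"
    and "carrier A ((p - q) * (p - q)) * q = q * carrier A ((p - q) * (p - q))"
proof -
  have "(p - q) * (p - q) \<in> A"
    using p q square_mem diff_mem proj_mem by blast
  moreover have "p * (p * x) = p * x" and "q * (q * x) = q * x" for x
    using proj_idem[OF p] proj_idem[OF q] by (metis mult.assoc)+
  then have "(p - q) * (p - q) * x = x * ((p - q) * (p - q))" if "x = p \<or> x = q" for x
    using that proj_idem[OF p] proj_idem[OF q] by (auto simp: algebra_simps)
  ultimately show "carrier A ((p - q) * (p - q)) * p = p * carrier A ((p - q) * (p - q))"
    and "carrier A ((p - q) * (p - q)) * q = q * carrier A ((p - q) * (p - q))"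
    using carrier_commute p q proj_mem by blast+
qed

lemma proj_eq_off_carrier_square_diff:
  assumes p: "p \<in> proj A" and q: "q \<in> proj A"
  shows "p * (1 - carrier A ((p - q) * (p - q))) = q * (1 - carrier A ((p - q) * (p - q)))"
proof -
  let ?d = "p - q"
  let ?E = "carrier A (?d * ?d)"
  have dA: "?d \<in> A" and DA: "?d * ?d \<in> A"
    using p q proj_mem diff_mem square_mem by blast+
  have E': "1 - ?E \<in> proj A"
    using one_minus_proj carrier_proj[OF DA] .
  have E'd: "(1 - ?E) * ?d = ?d * (1 - ?E)"
    using carrier_square_diff_commute[OF p q] by (simp add: algebra_simps)
  have "?E * (1 - ?E) = 0"
    using proj_idem[OF carrier_proj[OF DA]] mult_one_minus_eq_zero_iff by auto
  then have "?d * ?d * (1 - ?E) = 0"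
    using carrier_mult_eq_zero_iff[OF DA proj_mem[OF E']] by simp
  then have "(?d * (1 - ?E)) * (?d * (1 - ?E)) = 0"
    using E'd proj_idem[OF E'] by (metis mult.assoc)
  then have "?d * (1 - ?E) = 0"
    using square_eq_zero commuting_mult_mem[OF dA proj_mem[OF E'] E'd[symmetric]] by blast
  then show ?thesis
    by (simp add: algebra_simps)
qed

lemma is_meet_proj:
  assumes p: "p \<in> proj A" and q: "q \<in> proj A"
  shows "is_meet p q (p * (1 - carrier A ((p - q) * (p - q))))"
  unfolding is_meet_def
proof (intro conjI ballI impI)
  let ?D = "(p - q) * (p - q)"
  let ?E = "carrier A ?D"
  have DA: "?D \<in> A"
    using p q proj_mem diff_mem square_mem by blast
  have "(1 - ?E) * p = p * (1 - ?E)"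
    using carrier_square_diff_commute[OF p q] by (simp add: algebra_simps)
  then show m: "p * (1 - ?E) \<in> proj A"
    using commuting_mult_proj[OF p one_minus_proj[OF carrier_proj[OF DA]]] by simp
  show "sa_le Pos (p * (1 - ?E)) p"
    using proj_le_iff[OF m p] proj_idem[OF p] by (metis mult.assoc)
  show "sa_le Pos (p * (1 - ?E)) q"
    using proj_le_iff[OF m q] proj_idem[OF q] proj_eq_off_carrier_square_diff[OF p q]
    by (metis mult.assoc)
  fix t assume t: "t \<in> proj A" and "sa_le Pos t p \<and> sa_le Pos t q"
  then have pt: "p * t = t" and "q * t = t"
    using proj_le_iff[OF t p] proj_le_iff[OF t q] by auto
  then have "?D * t = 0"
    by (simp add: algebra_simps)
  then have "?E * t = 0"
    using carrier_mult_eq_zero_iff[OF DA proj_mem[OF t]] by simp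
  then have "p * (1 - ?E) * t = t"
    using pt by (simp add: algebra_simps)
  then show "sa_le Pos t (p * (1 - ?E))"
    using proj_le_iff[OF t m] by simp
qed

lemma pjoin_proj:
  assumes "p \<in> proj A" and "q \<in> proj A"
  shows "pjoin A Pos p q = 1 - (1 - p) * (1 - carrier A ((p - q) * (p - q)))"
proof -
  have "((1 - p) - (1 - q)) * ((1 - p) - (1 - q)) = (p - q) * (p - q)"
    by (simp add: algebra_simps)
  then show ?thesis
    using pjoin_eqI is_meet_proj one_minus_proj assms by metis
qed

lemma pjoin_mem_proj: "p \<in> proj A \<Longrightarrow> q \<in> proj A \<Longrightarrow> pjoin A Pos p q \<in> proj A"
  using pjoin_eqI is_meet_proj one_minus_proj unfolding is_meet_def by metis

end

section \<open>Two projections\<close>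

locale projection_pair = synaptic A Pos for A Pos :: "'r::real_algebra_1 set" +
  fixes p q :: 'r
  assumes p_proj: "p \<in> proj A" and q_proj: "q \<in> proj A"
begin

abbreviation cosine :: 'r where
  "cosine \<equiv> sa_sqrt Pos (p * q * p + perp p * perp q * perp p)"

abbreviation sine :: 'r where
  "sine \<equiv> sa_sqrt Pos (p * perp q * p + perp p * q * perp p)"

abbreviation commutator :: 'r where
  "commutator \<equiv> pmeet A Pos (pmeet A Pos (pmeet A Pos (pjoin A Pos p q) (pjoin A Pos p (perp q)))
      (pjoin A Pos (perp p) q)) (pjoin A Pos (perp p) (perp q))"

lemma p_mem: "p \<in> A" and q_mem: "q \<in> A"
  using proj_mem p_proj q_proj by blast+

lemma p_idem: "p * p = p" and p_idem_left: "p * (p * x) = p * x"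
  and q_idem: "q * q = q" and q_idem_left: "q * (q * x) = q * x"
  using proj_idem[OF p_proj] proj_idem[OF q_proj] by (metis mult.assoc)+

lemma sine_arg: "p * perp q * p + perp p * q * perp p = (p - q) * (p - q)"
  and cosine_arg: "p * q * p + perp p * perp q * perp p = (p - perp q) * (p - perp q)"
  and cosine_arg_eq: "(p - perp q) * (p - perp q) = 1 - (p - q) * (p - q)"
  using p_idem q_idem p_idem_left q_idem_left unfolding perp_def by (simp_all add: algebra_simps)

lemma sine_arg_Pos: "(p - q) * (p - q) \<in> Pos"
  and cosine_arg_Pos: "(p - perp q) * (p - perp q) \<in> Pos"
  using square_Pos diff_mem one_mem p_mem q_mem unfolding perp_def by blast+

lemma sine_Pos: "sine \<in> Pos" and sine_square: "sine * sine = (p - q) * (p - q)"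
  and cosine_Pos: "cosine \<in> Pos" and cosine_square: "cosine * cosine = (p - perp q) * (p - perp q)"
  using sa_sqrt_spec[OF sine_arg_Pos] sa_sqrt_spec[OF cosine_arg_Pos] unfolding sine_arg cosine_arg by simp_all

lemma sine_mem: "sine \<in> A" and cosine_mem: "cosine \<in> A"
  using Pos_mem sine_Pos cosine_Pos by blast+

lemma carrier_sine: "carrier A sine = carrier A ((p - q) * (p - q))"
  and carrier_cosine: "carrier A cosine = carrier A ((p - perp q) * (p - perp q))"
  using carrier_sa_sqrt[OF sine_arg_Pos] carrier_sa_sqrt[OF cosine_arg_Pos]
  unfolding sine_arg cosine_arg .

lemma sine_commute: "x \<in> {p, q} \<Longrightarrow> sine * x = x * sine"
  and cosine_commute: "x \<in> {p, q} \<Longrightarrow> cosine * x = x * cosine"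
proof -
  assume x: "x \<in> {p, q}"
  then have "(p - q) * (p - q) * x = x * ((p - q) * (p - q))"
    using p_idem q_idem p_idem_left q_idem_left by (auto simp: algebra_simps)
  then show "sine * x = x * sine" "cosine * x = x * cosine"
    using sa_sqrt_commute[OF sine_arg_Pos] sa_sqrt_commute[OF cosine_arg_Pos] x p_mem q_mem
    unfolding sine_arg cosine_arg cosine_arg_eq by (auto simp: algebra_simps)
qed

lemma cosine_sine_commute: "cosine * sine = sine * cosine"
proof -
  have "sine * (sine * sine) = (sine * sine) * sine"
    by (simp add: mult.assoc)
  then have "(p - perp q) * (p - perp q) * sine = sine * ((p - perp q) * (p - perp q))"
    unfolding cosine_arg_eq sine_square[symmetric] by (simp add: algebra_simps)
  then show ?thesis
    using sa_sqrt_commute[OF cosine_arg_Pos sine_mem] unfolding cosine_arg by simp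
qed

lemma carrier_sine_proj: "carrier A sine \<in> proj A"
  and carrier_cosine_proj: "carrier A cosine \<in> proj A"
  using carrier_proj sine_mem cosine_mem by blast+

lemma carrier_sine_commute: "x \<in> {p, q, cosine} \<Longrightarrow> carrier A sine * x = x * carrier A sine"
  using carrier_commute[OF sine_mem] sine_commute cosine_sine_commute p_mem q_mem cosine_mem
  by auto

lemma carrier_cosine_commute:
  "x \<in> {p, q, sine, carrier A sine} \<Longrightarrow> carrier A cosine * x = x * carrier A cosine"
  using carrier_commute[OF cosine_mem] cosine_commute cosine_sine_commute p_mem q_mem sine_mem
    carrier_sine_commute[of cosine] proj_mem[OF carrier_sine_proj]
  by auto

lemma perp_p_proj: "perp p \<in> proj A" and perp_q_proj: "perp q \<in> proj A"
  using one_minus_proj p_proj q_proj unfolding perp_def by blast+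

lemma pjoin_formulas:
  "pjoin A Pos p q = 1 - (1 - p) * (1 - carrier A sine)"
  "pjoin A Pos p (perp q) = 1 - (1 - p) * (1 - carrier A cosine)"
  "pjoin A Pos (perp p) q = 1 - p * (1 - carrier A cosine)"
  "pjoin A Pos (perp p) (perp q) = 1 - p * (1 - carrier A sine)"
proof -
  have "(perp p - q) * (perp p - q) = (p - perp q) * (p - perp q)"
    and "(perp p - perp q) * (perp p - perp q) = (p - q) * (p - q)"
    and "1 - perp p = p"
    unfolding perp_def by (simp_all add: algebra_simps)
  then show "pjoin A Pos p q = 1 - (1 - p) * (1 - carrier A sine)"
    "pjoin A Pos p (perp q) = 1 - (1 - p) * (1 - carrier A cosine)"
    "pjoin A Pos (perp p) q = 1 - p * (1 - carrier A cosine)"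
    "pjoin A Pos (perp p) (perp q) = 1 - p * (1 - carrier A sine)"
    using pjoin_proj[OF p_proj q_proj] pjoin_proj[OF p_proj perp_q_proj]
      pjoin_proj[OF perp_p_proj q_proj] pjoin_proj[OF perp_p_proj perp_q_proj]
    unfolding carrier_sine carrier_cosine by simp_all
qed

lemma carrier_commutation_rules:
  fixes x :: 'r
  defines "e \<equiv> carrier A sine" and "f \<equiv> carrier A cosine"
  shows "e * e = e" "e * (e * x) = e * x" "f * f = f" "f * (f * x) = f * x"
    "e * p = p * e" "e * (p * x) = p * (e * x)" "f * p = p * f" "f * (p * x) = p * (f * x)"
    "f * e = e * f" "f * (e * x) = e * (f * x)"
  using proj_idem[OF carrier_sine_proj] proj_idem[OF carrier_cosine_proj]
    carrier_sine_commute[of p] carrier_cosine_commute[of p] carrier_cosine_commute[of "carrier A sine"]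
  unfolding e_def f_def by (simp_all add: mult.assoc[symmetric])

lemma carrier_cosine_eq_pmeet:
  "carrier A cosine = pmeet A Pos (pjoin A Pos p (perp q)) (pjoin A Pos (perp p) q)"
  using pmeet_commuting[OF pjoin_mem_proj[OF p_proj perp_q_proj] pjoin_mem_proj[OF perp_p_proj q_proj]]
    p_idem p_idem_left carrier_commutation_rules
  unfolding pjoin_formulas by (simp add: algebra_simps)

lemma carrier_sine_eq_pmeet:
  "carrier A sine = pmeet A Pos (pjoin A Pos p q) (pjoin A Pos (perp p) (perp q))"
  using pmeet_commuting[OF pjoin_mem_proj[OF p_proj q_proj] pjoin_mem_proj[OF perp_p_proj perp_q_proj]]
    p_idem p_idem_left carrier_commutation_rules
  unfolding pjoin_formulas by (simp add: algebra_simps)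

lemma commutator_eq: "commutator = carrier A cosine * carrier A sine"
proof -
  let ?J1 = "pjoin A Pos p q" and ?J2 = "pjoin A Pos p (perp q)"
    and ?J3 = "pjoin A Pos (perp p) q" and ?J4 = "pjoin A Pos (perp p) (perp q)"
  have J: "?J1 \<in> proj A" "?J2 \<in> proj A" "?J3 \<in> proj A" "?J4 \<in> proj A"
    using pjoin_mem_proj p_proj q_proj perp_p_proj perp_q_proj by blast+
  define e where "e = carrier A sine"
  define f where "f = carrier A cosine"
  note normalize = p_idem p_idem_left carrier_commutation_rules[folded e_def f_def]
  \<comment> \<open>the four joins are polynomials in the pairwise commuting projections \<open>p\<close>, \<open>c\<degree>\<close>, \<open>s\<degree>\<close>\<close>
  have J12: "?J1 * ?J2 = ?J2 * ?J1" and J123: "?J1 * ?J2 * ?J3 = ?J3 * (?J1 * ?J2)"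
    and J1234: "?J1 * ?J2 * ?J3 * ?J4 = ?J4 * (?J1 * ?J2 * ?J3)"
    and prod: "?J1 * ?J2 * ?J3 * ?J4 = f * e"
    unfolding pjoin_formulas[folded e_def f_def] using normalize by (simp_all add: algebra_simps)
  have "pmeet A Pos ?J1 ?J2 = ?J1 * ?J2" and P12: "?J1 * ?J2 \<in> proj A"
    using pmeet_commuting commuting_mult_proj J J12 by blast+
  moreover have "pmeet A Pos (?J1 * ?J2) ?J3 = ?J1 * ?J2 * ?J3" and "?J1 * ?J2 * ?J3 \<in> proj A"
    using pmeet_commuting commuting_mult_proj P12 J J123 by blast+
  ultimately show ?thesis
    using pmeet_commuting J J1234 prod unfolding e_def f_def by simp
qed

lemma carrier_commute_commutator:
  "carrier A cosine * commutator = commutator * carrier A cosine"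
  "carrier A sine * commutator = commutator * carrier A sine"
  unfolding commutator_eq using carrier_commutation_rules by (simp_all add: mult.assoc)

lemma carrier_cosine_sine_mult: "carrier A (cosine * sine) = carrier A cosine * carrier A sine"
  using carrier_mult[OF cosine_mem sine_mem cosine_sine_commute] .

lemma pmeet_carrier_cosine_sine:
  "pmeet A Pos (carrier A cosine) (carrier A sine) = carrier A cosine * carrier A sine"
  using pmeet_commuting[OF carrier_cosine_proj carrier_sine_proj] carrier_commutation_rules by simp

lemma cosine_square_add_sine_square: "cosine * cosine + sine * sine = 1"
  and sine_square_add_cosine_square: "sine * sine + cosine * cosine = 1"
  using cosine_square cosine_arg_eq sine_square by simp_all

end

theorem theorem4p4:
  fixes A Pos :: "'r::real_algebra_1 set" and p q r c s :: 'r
  assumes SA: "synaptic_algebra A Pos"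
    and hp: "p \<in> proj A" and hq: "q \<in> proj A"
    and r_def: "r = pmeet A Pos (pmeet A Pos (pmeet A Pos (pjoin A Pos p q) (pjoin A Pos p (perp q)))
                      (pjoin A Pos (perp p) q)) (pjoin A Pos (perp p) (perp q))"
    and c_def: "c = sa_sqrt Pos (p * q * p + perp p * perp q * perp p)"
    and s_def: "s = sa_sqrt Pos (p * perp q * p + perp p * q * perp p)"
  shows
    \<comment> \<open>(i)\<close>
    "(commutes (carrier A c) p \<and> commutes (carrier A c) q \<and> commutes (carrier A c) s \<and>
      commutes (carrier A c) r \<and> commutes (carrier A s) p \<and> commutes (carrier A s) q \<and>
      commutes (carrier A s) r \<and> commutes (carrier A s) c \<and> commutes (carrier A c) (carrier A s))
   \<and> \<comment> \<open>(ii)\<close>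
     (carrier A c = pmeet A Pos (pjoin A Pos p (perp q)) (pjoin A Pos (perp p) q) \<and>
      carrier A s = pmeet A Pos (pjoin A Pos p q) (pjoin A Pos (perp p) (perp q)))
   \<and> \<comment> \<open>(iii)\<close>
     (carrier A (c * s) = carrier A c * carrier A s \<and>
      carrier A c * carrier A s = pmeet A Pos (carrier A c) (carrier A s) \<and>
      pmeet A Pos (carrier A c) (carrier A s) =
        pmeet A Pos (pmeet A Pos (pmeet A Pos (pjoin A Pos p q) (pjoin A Pos p (perp q)))
                      (pjoin A Pos (perp p) q)) (pjoin A Pos (perp p) (perp q)) \<and>
      carrier A (c * s) = r)
   \<and> \<comment> \<open>(iv)\<close>
     (c * c * perp (carrier A s) = perp (carrier A s) \<and>
      perp (carrier A s) * (c * c) = perp (carrier A s) \<and>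
      sa_le Pos (perp (carrier A s)) (c * c) \<and> sa_le Pos (c * c) c)
   \<and> \<comment> \<open>(v)\<close>
     (s * s * perp (carrier A c) = perp (carrier A c) \<and>
      perp (carrier A c) * (s * s) = perp (carrier A c) \<and>
      sa_le Pos (perp (carrier A c)) (s * s) \<and> sa_le Pos (s * s) s)"
proof -
  interpret projection_pair A Pos p q
    by (intro projection_pair.intro projection_pair_axioms.intro synaptic_algebra_imp_synaptic SA hp hq)
  note iv = sum_squares_eq_one_carrier[OF cosine_Pos sine_Pos cosine_square_add_sine_square]
  note v = sum_squares_eq_one_carrier[OF sine_Pos cosine_Pos sine_square_add_cosine_square]
  show ?thesis
    unfolding c_def s_def r_def perp_def[of "carrier A _"] commutes_def
    using iv v
    by (simp add: carrier_cosine_commute carrier_sine_commute carrier_commute_commutator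
        carrier_cosine_eq_pmeet[symmetric] carrier_sine_eq_pmeet[symmetric]
        carrier_cosine_sine_mult pmeet_carrier_cosine_sine commutator_eq[symmetric]
        commutator_eq[unfolded carrier_commutation_rules(9), symmetric])
qed

end
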